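(* Let $G=(V,E)$ be an undirected graph and $\tau$ a positive integer. The polytope $$P_1^\tau(G)=\{x\in\mathbb{R}^{E^+\cup E^-}: x_{e^+}\ge1,\ x_{e^-}\ge1,\ x_{e^+}+x_{e^-}=\tau\ \forall e\in E,\ x(\delta^+_{\vec G}(U))\ge\tau\ \forall\,\emptyset\neq U\subsetneq V\}$$ is integral (every vertex is an integral vector).
   Context: Graphs are finite and loopless; parallel edges allowed. $\vec G=(V,E^+\cup E^-)$ is obtained from $G$ by replacing each edge $e=\{u,v\}$ by arcs $e^+=(u,v)$ and $e^-=(v,u)$ (choice arbitrary); $\delta^+_{\vec G}(U)$ is the set of arcs leaving $U$ and $x(B)=\sum_{e\in B}x_e$. *)

theory Defs
  imports "HOL-Analysis.Analysis"
begin

text \<open>A finite loopless multigraph: vertex type 'v (V = UNIV), edge type 'e (E = UNIV),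
  each edge e has two distinct endpoints ep1 e and ep2 e. The bidirected graph has arcs
  (e, True) = e+ = (ep1 e, ep2 e) and (e, False) = e- = (ep2 e, ep1 e).\<close>

definition arc_tail :: "('e \<Rightarrow> 'v) \<Rightarrow> ('e \<Rightarrow> 'v) \<Rightarrow> 'e \<times> bool \<Rightarrow> 'v" where
  "arc_tail ep1 ep2 a = (if snd a then ep1 (fst a) else ep2 (fst a))"

definition arc_head :: "('e \<Rightarrow> 'v) \<Rightarrow> ('e \<Rightarrow> 'v) \<Rightarrow> 'e \<times> bool \<Rightarrow> 'v" where
  "arc_head ep1 ep2 a = (if snd a then ep2 (fst a) else ep1 (fst a))"

definition out_arcs :: "('e \<Rightarrow> 'v) \<Rightarrow> ('e \<Rightarrow> 'v) \<Rightarrow> 'v set \<Rightarrow> ('e \<times> bool) set" where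
  "out_arcs ep1 ep2 U = {a. arc_tail ep1 ep2 a \<in> U \<and> arc_head ep1 ep2 a \<notin> U}"

definition P1tau :: "('e::finite \<Rightarrow> 'v::finite) \<Rightarrow> ('e \<Rightarrow> 'v) \<Rightarrow> nat \<Rightarrow> (real ^ ('e \<times> bool)) set" where
  "P1tau ep1 ep2 \<tau> = {x.
      (\<forall>e. x $ (e, True) \<ge> 1 \<and> x $ (e, False) \<ge> 1 \<and> x $ (e, True) + x $ (e, False) = real \<tau>) \<and>
      (\<forall>U. U \<noteq> {} \<and> U \<noteq> UNIV \<longrightarrow> (\<Sum>a\<in>out_arcs ep1 ep2 U. x $ a) \<ge> real \<tau>)}"

end

theory Submission
  imports Defs
begin

text \<open>
  Let x be an extreme point and call a cut U tight if the arcs leaving U carry exactly \<tau>.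
  Writing y for the restriction of x to the arcs e+, the value of the cut U is the net outflow
  of y from U plus \<tau> times the number of edges entering U, so y has integral net outflow from
  every tight set. The cut function is submodular, so tight sets and complements of tight sets
  avoiding a fixed root can be uncrossed, and the atoms of a maximal laminar subfamily refine
  every tight set; y has integral net outflow from each atom. Contract the atoms. An atom
  incident with exactly one fractional edge would make that edge integral; hence every atom
  meets at least two fractional edges, so there are at least as many fractional edges as atoms
  they touch, and their incidence vectors are dependent: they carry a nonzero circulation d.
  Such a d has zero net outflow from every union of atoms, in particular from every tight set,
  so x \<plusminus> t(d, -d) stays in the polytope for small t > 0, contradicting extremality.
\<close>

section \<open>Net flow across vertex sets\<close>

definition net_outflow :: "('e::finite \<Rightarrow> 'v) \<Rightarrow> ('e \<Rightarrow> 'v) \<Rightarrow> ('e \<Rightarrow> real) \<Rightarrow> 'v set \<Rightarrow> real" where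
  "net_outflow ep1 ep2 g U = (\<Sum>e\<in>UNIV. g e * (of_bool (ep1 e \<in> U) - of_bool (ep2 e \<in> U)))"

lemma net_outflow_empty [simp]: "net_outflow ep1 ep2 g {} = 0"
  and net_outflow_UNIV [simp]: "net_outflow ep1 ep2 g UNIV = 0"
  by (simp_all add: net_outflow_def)

lemma net_outflow_Un:
  "net_outflow ep1 ep2 g (A \<union> B) =
    net_outflow ep1 ep2 g A + net_outflow ep1 ep2 g B - net_outflow ep1 ep2 g (A \<inter> B)"
  unfolding net_outflow_def sum.distrib[symmetric] sum_subtractf[symmetric]
  by (rule sum.cong) (auto simp: algebra_simps)

lemma net_outflow_Compl: "net_outflow ep1 ep2 g (- U) = - net_outflow ep1 ep2 g U"
  unfolding net_outflow_def sum_negf[symmetric] by (rule sum.cong) auto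

lemma net_outflow_swap: "net_outflow ep2 ep1 g U = - net_outflow ep1 ep2 g U"
  unfolding net_outflow_def sum_negf[symmetric] by (rule sum.cong) auto

lemma net_outflow_vimage:
  "net_outflow (q \<circ> ep1) (q \<circ> ep2) g W = net_outflow ep1 ep2 g (q -` W)"
  by (simp add: net_outflow_def)

lemma net_outflow_eq_sum_singletons:
  fixes ep1 ep2 :: "'e::finite \<Rightarrow> 'v::finite"
  shows "net_outflow ep1 ep2 g U = (\<Sum>s\<in>U. net_outflow ep1 ep2 g {s})"
proof -
  have indicator_sum: "of_bool (v \<in> U) = (\<Sum>s\<in>U. of_bool (v = s) :: real)" for v
    by (simp add: sum.delta)
  show ?thesis
    unfolding net_outflow_def indicator_sum sum_subtractf[symmetric] sum_distrib_left
    by (simp add: sum.swap[of _ U])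
qed

lemma net_outflow_eq_0_if_quotient_circulation:
  fixes ep1 ep2 :: "'e::finite \<Rightarrow> 'v" and q :: "'v \<Rightarrow> 'w::finite"
  assumes "\<And>S. net_outflow (q \<circ> ep1) (q \<circ> ep2) d {S} = 0" "q -` q ` U = U"
  shows "net_outflow ep1 ep2 d U = 0"
proof -
  have "net_outflow ep1 ep2 d U = net_outflow (q \<circ> ep1) (q \<circ> ep2) d (q ` U)"
    using assms(2) by (simp add: net_outflow_vimage)
  also have "\<dots> = 0"
    using assms(1) by (simp add: net_outflow_eq_sum_singletons[of _ _ _ "q ` U"])
  finally show ?thesis .
qed

lemma sum_out_arcs_eq_sum_UNIV:
  fixes g :: "'e::finite \<times> bool \<Rightarrow> real"
  shows "(\<Sum>a\<in>out_arcs ep1 ep2 U. g a) = (\<Sum>a\<in>UNIV. of_bool (a \<in> out_arcs ep1 ep2 U) * g a)"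
  by (rule sum.mono_neutral_cong_left) auto

lemma sum_out_arcs:
  fixes g :: "'e::finite \<times> bool \<Rightarrow> real"
  assumes "\<And>e. g (e, True) + g (e, False) = c"
  shows "(\<Sum>a\<in>out_arcs ep1 ep2 U. g a) =
    net_outflow ep1 ep2 (\<lambda>e. g (e, True)) U + c * card {e. ep2 e \<in> U \<and> ep1 e \<notin> U}"
proof -
  have "(\<Sum>a\<in>out_arcs ep1 ep2 U. g a) =
      (\<Sum>e\<in>UNIV. \<Sum>b\<in>UNIV. of_bool ((e, b) \<in> out_arcs ep1 ep2 U) * g (e, b))"
    unfolding sum_out_arcs_eq_sum_UNIV UNIV_Times_UNIV[symmetric] sum.cartesian_product
    by (simp add: case_prod_beta)
  also have "\<dots> = (\<Sum>e\<in>UNIV. g (e, True) * (of_bool (ep1 e \<in> U) - of_bool (ep2 e \<in> U))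
                     + c * of_bool (ep2 e \<in> U \<and> ep1 e \<notin> U))"
    using assms[symmetric]
    by (intro sum.cong) (auto simp: UNIV_bool out_arcs_def arc_tail_def arc_head_def algebra_simps)
  finally show ?thesis
    by (simp add: net_outflow_def sum.distrib sum_distrib_left[symmetric] sum_of_bool_eq)
qed

lemma sum_out_arcs_submodular:
  fixes g :: "'e::finite \<times> bool \<Rightarrow> real"
  assumes "\<And>a. 0 \<le> g a"
  shows "(\<Sum>a\<in>out_arcs ep1 ep2 (A \<inter> B). g a) + (\<Sum>a\<in>out_arcs ep1 ep2 (A \<union> B). g a)
       \<le> (\<Sum>a\<in>out_arcs ep1 ep2 A. g a) + (\<Sum>a\<in>out_arcs ep1 ep2 B. g a)"
  unfolding sum_out_arcs_eq_sum_UNIV sum.distrib[symmetric]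
  by (rule sum_mono) (use assms in \<open>auto simp: out_arcs_def\<close>)

definition arc_vector :: "('e::finite \<Rightarrow> real) \<Rightarrow> real^('e \<times> bool)" where
  "arc_vector d = (\<chi> a. if snd a then d (fst a) else - d (fst a))"

lemma sum_out_arcs_arc_vector:
  "(\<Sum>a\<in>out_arcs ep1 ep2 U. arc_vector d $ a) = net_outflow ep1 ep2 d U"
  using sum_out_arcs[of "\<lambda>a. arc_vector d $ a" 0] by (simp add: arc_vector_def)

section \<open>Circulations on fractional edges\<close>

text \<open>Loops at s are counted twice.\<close>
definition degree_in :: "'e set \<Rightarrow> ('e \<Rightarrow> 'w) \<Rightarrow> ('e \<Rightarrow> 'w) \<Rightarrow> 'w \<Rightarrow> nat" where
  "degree_in F a b s = card {e\<in>F. a e = s} + card {e\<in>F. b e = s}"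

lemma sum_degree_in:
  assumes "finite F" "finite S" "a ` F \<union> b ` F \<subseteq> S"
  shows "(\<Sum>s\<in>S. degree_in F a b s) = 2 * card F"
proof -
  have fibres: "(\<Sum>s\<in>S. card {e\<in>F. f e = s}) = card F" if "f ` F \<subseteq> S" for f :: "'a \<Rightarrow> 'b"
  proof -
    have "(\<Sum>s\<in>S. card {e\<in>F. f e = s}) = (\<Sum>s\<in>S. \<Sum>e\<in>F. of_bool (f e = s))"
      using assms(1) by (simp add: sum_of_bool_eq Int_def)
    also have "\<dots> = (\<Sum>e\<in>F. \<Sum>s\<in>S. of_bool (f e = s))"
      by (rule sum.swap)
    also have "\<dots> = card F"
      using that assms(2) by (simp add: sum.delta image_subset_iff cong: sum.cong)
    finally show ?thesis .
  qed
  show ?thesis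
    using fibres[of a] fibres[of b] assms(3) by (simp add: degree_in_def sum.distrib)
qed

lemma card_endpoints_le_card:
  assumes "finite F" "\<And>s. s \<in> a ` F \<union> b ` F \<Longrightarrow> 2 \<le> degree_in F a b s"
  shows "card (a ` F \<union> b ` F) \<le> card F"
proof -
  have "2 * card (a ` F \<union> b ` F) = (\<Sum>s\<in>a ` F \<union> b ` F. 2)"
    by simp
  also have "\<dots> \<le> (\<Sum>s\<in>a ` F \<union> b ` F. degree_in F a b s)"
    by (rule sum_mono) (rule assms(2))
  also have "\<dots> = 2 * card F"
    using assms(1) by (intro sum_degree_in) auto
  finally show ?thesis by simp
qed

lemma leaf_edge_Ints:
  fixes a b :: "'e::finite \<Rightarrow> 'w" and y :: "'e \<Rightarrow> real"
  assumes "degree_in F a b s = 1" "\<And>e. e \<notin> F \<Longrightarrow> y e \<in> \<int>" "net_outflow a b y {s} \<in> \<int>"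
  shows "\<exists>e\<in>F. y e \<in> \<int>"
proof -
  have one_sided: "\<exists>e\<in>F. y e \<in> \<int>"
    if a1: "card {e\<in>F. a' e = s} = 1" and b0: "card {e\<in>F. b' e = s} = 0"
      and net: "net_outflow a' b' y {s} \<in> \<int>" for a' b' :: "'e \<Rightarrow> 'w"
  proof -
    obtain e0 where e0: "{e\<in>F. a' e = s} = {e0}"
      using a1 card_1_singletonE by blast
    have b': "b' e \<noteq> s" if "e \<in> F" for e
      using b0 that by auto
    define c where "c e = y e * (of_bool (a' e = s) - of_bool (b' e = s))" for e
    have "(\<Sum>e\<in>F. c e) = (\<Sum>e\<in>F. if e = e0 then y e else 0)"
      using e0 b' by (intro sum.cong) (auto simp: c_def)
    then have F_part: "(\<Sum>e\<in>F. c e) = y e0"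
      using e0 by auto
    have "net_outflow a' b' y {s} = (\<Sum>e\<in>UNIV. c e)"
      by (simp add: net_outflow_def c_def)
    also have "\<dots> = (\<Sum>e\<in>F. c e) + (\<Sum>e\<in>-F. c e)"
      by (subst sum.union_disjoint[symmetric]) auto
    finally have "net_outflow a' b' y {s} = y e0 + (\<Sum>e\<in>-F. c e)"
      unfolding F_part .
    moreover have "(\<Sum>e\<in>-F. c e) \<in> \<int>"
      using assms(2) by (intro Ints_sum) (auto simp: c_def)
    ultimately have "y e0 \<in> \<int>"
      using net by (metis Ints_diff add_diff_cancel_right')
    then show ?thesis
      using e0 by auto
  qed
  have "card {e\<in>F. a e = s} = 1 \<and> card {e\<in>F. b e = s} = 0
      \<or> card {e\<in>F. b e = s} = 1 \<and> card {e\<in>F. a e = s} = 0"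
    using assms(1) unfolding degree_in_def by linarith
  then show ?thesis
    using one_sided[of a b] one_sided[of b a] assms(3) net_outflow_swap[of b a y "{s}"] by auto
qed

lemma dim_incidence_vectors_less_card:
  fixes a b :: "'e \<Rightarrow> 'w::finite"
  assumes "F \<noteq> {}"
  shows "dim ((\<lambda>e. axis (a e) 1 - axis (b e) (1::real)) ` F) < card (a ` F \<union> b ` F)"
proof -
  obtain s0 where s0: "s0 \<in> a ` F \<union> b ` F"
    using assms by auto
  define B :: "(real^'w) set" where "B = (\<lambda>s. axis s 1 - axis s0 1) ` (a ` F \<union> b ` F - {s0})"
  have axis_diff: "axis s 1 - axis s0 (1::real) \<in> span B" if "s \<in> a ` F \<union> b ` F" for s
    using that by (cases "s = s0") (auto simp: B_def span_zero intro: span_base)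
  have "axis (a e) 1 - axis (b e) 1 \<in> span B" if "e \<in> F" for e
  proof -
    have "axis (a e) 1 - axis (b e) (1::real) =
        (axis (a e) 1 - axis s0 1) - (axis (b e) 1 - axis s0 1)"
      by simp
    then show ?thesis
      using span_diff[OF axis_diff axis_diff] that by simp
  qed
  then have "dim ((\<lambda>e. axis (a e) 1 - axis (b e) (1::real)) ` F) \<le> card B"
    by (intro dim_le_card) (auto simp: B_def)
  also have "\<dots> \<le> card (a ` F \<union> b ` F - {s0})"
    unfolding B_def by (rule card_image_le) simp
  also have "\<dots> < card (a ` F \<union> b ` F)"
    using s0 by (intro card_Diff1_less) auto
  finally show ?thesis .
qed

lemma ex_linear_dependence_if_dim_less_card:
  fixes f :: "'a \<Rightarrow> 'b::euclidean_space"
  assumes "finite F" "dim (f ` F) < card F"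
  shows "\<exists>d. (\<exists>e\<in>F. d e \<noteq> 0) \<and> (\<Sum>e\<in>F. d e *\<^sub>R f e) = 0"
proof (cases "inj_on f F")
  case False
  then obtain e e' where "e \<in> F" "e' \<in> F" "e \<noteq> e'" "f e = f e'"
    unfolding inj_on_def by auto
  define d :: "'a \<Rightarrow> real" where "d z = of_bool (z = e) - of_bool (z = e')" for z
  have pick: "(\<Sum>z\<in>F. of_bool (z = e0) *\<^sub>R f z) = f e0" if "e0 \<in> F" for e0
    using assms(1) that by (subst sum.cong[OF refl, of _ _ "\<lambda>z. if z = e0 then f z else 0"]) auto
  have "(\<Sum>z\<in>F. d z *\<^sub>R f z) = f e - f e'"
    unfolding d_def scaleR_diff_left sum_subtractf pick[OF \<open>e \<in> F\<close>] pick[OF \<open>e' \<in> F\<close>] ..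
  then show ?thesis
    using \<open>e \<in> F\<close> \<open>e \<noteq> e'\<close> \<open>f e = f e'\<close> by (intro exI[of _ d]) (auto simp: d_def)
next
  case True
  then have "dependent (f ` F)"
    using assms independent_card_le_dim[of "f ` F" "f ` F"] by (auto simp: card_image)
  then obtain u where u: "\<exists>w\<in>f ` F. u w \<noteq> 0" "(\<Sum>w\<in>f ` F. u w *\<^sub>R w) = 0"
    using dependent_finite[of "f ` F"] assms(1) by auto
  then show ?thesis
    by (intro exI[of _ "u \<circ> f"]) (auto simp: sum.reindex[OF True])
qed

lemma ex_circulation_if_card_le:
  fixes a b :: "'e::finite \<Rightarrow> 'w::finite"
  assumes "F \<noteq> {}" "card (a ` F \<union> b ` F) \<le> card F"
  shows "\<exists>d. (\<exists>e. d e \<noteq> 0) \<and> (\<forall>e. d e \<noteq> 0 \<longrightarrow> e \<in> F) \<and> (\<forall>s. net_outflow a b d {s} = 0)"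
proof -
  define col :: "'e \<Rightarrow> real^'w" where "col e = axis (a e) 1 - axis (b e) 1" for e
  have "dim (col ` F) < card F"
    using dim_incidence_vectors_less_card[where a = a and b = b, OF assms(1)] assms(2)
    unfolding col_def by linarith
  then obtain u where u: "\<exists>e\<in>F. u e \<noteq> 0" "(\<Sum>e\<in>F. u e *\<^sub>R col e) = 0"
    using ex_linear_dependence_if_dim_less_card[of F col] by auto
  define d where "d e = (if e \<in> F then u e else 0)" for e
  have "(\<Sum>e\<in>UNIV. d e *\<^sub>R col e) = 0"
    using u(2) by (simp add: d_def if_distrib[of "\<lambda>c. c *\<^sub>R _"] sum.If_cases)
  moreover have "net_outflow a b d {s} = (\<Sum>e\<in>UNIV. d e *\<^sub>R col e) $ s" for s
    unfolding net_outflow_def col_def by (simp add: sum_component axis_def; intro sum.cong; auto)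
  ultimately have "net_outflow a b d {s} = 0" for s
    by simp
  then show ?thesis
    using u(1) by (intro exI[of _ d]) (auto simp: d_def)
qed

lemma ex_fractional_circulation:
  fixes a b :: "'e::finite \<Rightarrow> 'w::finite" and y :: "'e \<Rightarrow> real"
  assumes "\<And>s. net_outflow a b y {s} \<in> \<int>" "\<exists>e. y e \<notin> \<int>"
  shows "\<exists>d. (\<exists>e. d e \<noteq> 0) \<and> (\<forall>e. d e \<noteq> 0 \<longrightarrow> y e \<notin> \<int>) \<and> (\<forall>s. net_outflow a b d {s} = 0)"
proof -
  define F where "F = {e. y e \<notin> \<int>}"
  have no_leaf: "degree_in F a b s \<noteq> 1" for s
    using leaf_edge_Ints[of F a b s y, OF _ _ assms(1)] unfolding F_def by blast
  have "2 \<le> degree_in F a b s" if "s \<in> a ` F \<union> b ` F" for s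
  proof -
    have "degree_in F a b s \<noteq> 0"
      using that by (auto simp: degree_in_def)
    then show ?thesis
      using no_leaf[of s] by linarith
  qed
  then have "card (a ` F \<union> b ` F) \<le> card F"
    by (intro card_endpoints_le_card) auto
  then show ?thesis
    using ex_circulation_if_card_le[of F a b] assms(2) unfolding F_def by blast
qed

section \<open>Laminar families and uncrossing\<close>

definition crosses :: "'a set \<Rightarrow> 'a set \<Rightarrow> bool" where
  "crosses A B \<longleftrightarrow> A \<inter> B \<noteq> {} \<and> \<not> A \<subseteq> B \<and> \<not> B \<subseteq> A"

definition laminar :: "'a set set \<Rightarrow> bool" where
  "laminar L \<longleftrightarrow> (\<forall>A\<in>L. \<forall>B\<in>L. \<not> crosses A B)"

definition atom :: "'a set set \<Rightarrow> 'a \<Rightarrow> 'a set" where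
  "atom L v = {w. \<forall>A\<in>L. w \<in> A \<longleftrightarrow> v \<in> A}"

lemma crosses_sym: "crosses A B \<longleftrightarrow> crosses B A"
  unfolding crosses_def by blast

lemma laminar_subset: "laminar L \<Longrightarrow> K \<subseteq> L \<Longrightarrow> laminar K"
  unfolding laminar_def by blast

lemma atom_eq_iff: "atom L w = atom L v \<longleftrightarrow> w \<in> atom L v"
  unfolding atom_def by auto

lemma vimage_atom_singleton: "atom L -` {S} = (if S \<in> range (atom L) then S else {})"
proof (cases "S \<in> range (atom L)")
  case True
  then obtain v where "S = atom L v"
    by blast
  then show ?thesis
    using True unfolding vimage_def by (simp add: atom_eq_iff)
qed auto

lemma laminar_Union_Ints:
  fixes \<phi> :: "'a set \<Rightarrow> real"
  assumes "finite L" "laminar L" "\<And>A. A \<in> L \<Longrightarrow> \<phi> A \<in> \<int>"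
    and "\<phi> {} = 0" and modular: "\<And>A B. \<phi> (A \<union> B) = \<phi> A + \<phi> B - \<phi> (A \<inter> B)"
  shows "\<phi> (\<Union>L) \<in> \<int>"
  using assms(1-3)
proof (induction "card L" arbitrary: L rule: less_induct)
  case less
  show ?case
  proof (cases "L = {}")
    case True
    then show ?thesis using \<open>\<phi> {} = 0\<close> by simp
  next
    case False
    then obtain A where A: "A \<in> L" and minimal: "\<And>B. B \<in> L \<Longrightarrow> B \<subseteq> A \<Longrightarrow> B = A"
      using finite_has_minimal[OF less.prems(1)] by metis
    have IH: "\<phi> (\<Union>(L - {A})) \<in> \<int>"
    proof (rule less.hyps)
      show "card (L - {A}) < card L"
        using less.prems(1) A by (rule card_Diff1_less)
      show "laminar (L - {A})"
        using less.prems(2) by (rule laminar_subset) blast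
    qed (use less.prems in auto)
    have no_cross: "\<not> crosses A B" if "B \<in> L" for B
      using less.prems(2) A that unfolding laminar_def by blast
    have "A \<inter> \<Union>(L - {A}) = {} \<or> A \<inter> \<Union>(L - {A}) = A"
    proof (cases "\<exists>B\<in>L - {A}. A \<subseteq> B")
      case False
      then have "A \<inter> B = {}" if "B \<in> L - {A}" for B
        using no_cross[of B] minimal[of B] that unfolding crosses_def by blast
      then show ?thesis
        by blast
    qed blast
    then have "\<phi> (A \<inter> \<Union>(L - {A})) \<in> \<int>"
      using less.prems(3)[OF A] \<open>\<phi> {} = 0\<close> by auto
    moreover have "\<Union>L = A \<union> \<Union>(L - {A})"
      using A by auto
    ultimately show ?thesis
      using modular less.prems(3)[OF A] IH by simp
  qed
qed

lemma laminar_atom_eq_Diff: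
  assumes "laminar L" "M \<in> L" "v \<in> M" and minimal: "\<And>B. B \<in> L \<Longrightarrow> v \<in> B \<Longrightarrow> B \<subseteq> M \<Longrightarrow> B = M"
  shows "atom L v = M - \<Union>{A\<in>L. A \<subset> M}"
proof (intro set_eqI iffI)
  fix w
  assume "w \<in> atom L v"
  then show "w \<in> M - \<Union>{A\<in>L. A \<subset> M}"
    using assms(2,3) minimal unfolding atom_def by blast
next
  fix w
  assume w: "w \<in> M - \<Union>{A\<in>L. A \<subset> M}"
  have "w \<in> A \<longleftrightarrow> v \<in> A" if "A \<in> L" for A
  proof -
    have "A \<inter> M = {} \<or> A \<subseteq> M \<or> M \<subseteq> A"
      using assms(1,2) that unfolding laminar_def crosses_def by blast
    then show ?thesis
      using w assms(3) minimal[OF that] that by blast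
  qed
  then show "w \<in> atom L v"
    unfolding atom_def by blast
qed

lemma laminar_atom_Ints:
  fixes \<phi> :: "'a set \<Rightarrow> real"
  assumes "finite L" "laminar L" "\<And>A. A \<in> L \<Longrightarrow> \<phi> A \<in> \<int>" "\<phi> UNIV \<in> \<int>"
    and "\<phi> {} = 0" and modular: "\<And>A B. \<phi> (A \<union> B) = \<phi> A + \<phi> B - \<phi> (A \<inter> B)"
  shows "\<phi> (atom L v) \<in> \<int>"
proof -
  have diff: "\<phi> (M - X) = \<phi> M - \<phi> X" if "X \<subseteq> M" for M X
  proof -
    have "(M - X) \<union> X = M" "(M - X) \<inter> X = {}"
      using that by auto
    then show ?thesis
      using modular[of "M - X" X] \<open>\<phi> {} = 0\<close> by simp
  qed
  have Union_Ints: "\<phi> (\<Union>K) \<in> \<int>" if "K \<subseteq> L" for K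
  proof (rule laminar_Union_Ints)
    show "finite K" "laminar K"
      using that assms(1,2) by (auto intro: finite_subset laminar_subset)
  qed (use that assms(3,5) modular in auto)
  show ?thesis
  proof (cases "\<exists>A\<in>L. v \<in> A")
    case True
    then obtain M where "M \<in> L" "v \<in> M" "\<And>B. B \<in> L \<Longrightarrow> v \<in> B \<Longrightarrow> B \<subseteq> M \<Longrightarrow> B = M"
      using finite_has_minimal[of "{A\<in>L. v \<in> A}"] assms(1) by auto
    then have "atom L v = M - \<Union>{A\<in>L. A \<subset> M}"
      using assms(2) by (intro laminar_atom_eq_Diff)
    moreover have "\<Union>{A\<in>L. A \<subset> M} \<subseteq> M"
      by blast
    ultimately show ?thesis
      using diff[of "\<Union>{A\<in>L. A \<subset> M}" M] assms(3)[OF \<open>M \<in> L\<close>] Union_Ints[of "{A\<in>L. A \<subset> M}"]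
      by auto
  next
    case False
    then have "atom L v = UNIV - \<Union>L"
      unfolding atom_def by auto
    then show ?thesis
      using diff[of "\<Union>L" UNIV] assms(4) Union_Ints[of L] by auto
  qed
qed

definition uncrossable :: "'a set set \<Rightarrow> bool" where
  "uncrossable \<F> \<longleftrightarrow> (\<forall>A\<in>\<F>. \<forall>B\<in>\<F>. crosses A B \<longrightarrow>
     (A \<inter> B \<in> \<F> \<and> A \<union> B \<in> \<F>) \<or> (A - B \<in> \<F> \<and> B - A \<in> \<F>))"

lemma maximal_laminar_atom_iff:
  assumes "uncrossable \<F>" "finite L" "L \<subseteq> \<F>" "laminar L"
    and maximal: "\<And>A. A \<in> \<F> \<Longrightarrow> \<forall>B\<in>L. \<not> crosses B A \<Longrightarrow> A \<in> L"
    and "A \<in> \<F>" "w \<in> atom L v"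
  shows "w \<in> A \<longleftrightarrow> v \<in> A"
  using \<open>A \<in> \<F>\<close>
proof (induction "card {B\<in>L. crosses B A}" arbitrary: A rule: less_induct)
  case less
  have atom_L: "w \<in> B \<longleftrightarrow> v \<in> B" if "B \<in> L" for B
    using \<open>w \<in> atom L v\<close> that unfolding atom_def by blast
  show ?case
  proof (cases "\<exists>B\<in>L. crosses B A")
    case False
    then show ?thesis
      using maximal less.prems atom_L by blast
  next
    case True
    then obtain B where B: "B \<in> L" "crosses B A"
      by blast
    have fewer_crossings: "card {C\<in>L. crosses C Z} < card {C\<in>L. crosses C A}"
      if "Z \<in> {A \<inter> B, A \<union> B, A - B, B - A}" for Z
    proof (rule psubset_card_mono)
      have "\<not> crosses C B" if "C \<in> L" for C
        using \<open>laminar L\<close> B(1) that unfolding laminar_def by blast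
      then have "{C\<in>L. crosses C Z} \<subseteq> {C\<in>L. crosses C A}"
        using \<open>Z \<in> {A \<inter> B, A \<union> B, A - B, B - A}\<close> B(2) unfolding crosses_def by blast
      moreover have "\<not> crosses B Z"
        using \<open>Z \<in> {A \<inter> B, A \<union> B, A - B, B - A}\<close> unfolding crosses_def by blast
      ultimately show "{C\<in>L. crosses C Z} \<subset> {C\<in>L. crosses C A}"
        using B by blast
    qed (use \<open>finite L\<close> in simp)
    have "B \<in> \<F>"
      using B(1) \<open>L \<subseteq> \<F>\<close> by blast
    then have "(A \<inter> B \<in> \<F> \<and> A \<union> B \<in> \<F>) \<or> (A - B \<in> \<F> \<and> B - A \<in> \<F>)"
      using \<open>uncrossable \<F>\<close> less.prems B(2) unfolding uncrossable_def by (simp add: crosses_sym)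
    then show ?thesis
    proof
      assume "A \<inter> B \<in> \<F> \<and> A \<union> B \<in> \<F>"
      then have "w \<in> A \<inter> B \<longleftrightarrow> v \<in> A \<inter> B" "w \<in> A \<union> B \<longleftrightarrow> v \<in> A \<union> B"
        using less.hyps[OF fewer_crossings] by auto
      then show ?thesis
        using atom_L[OF B(1)] by blast
    next
      assume "A - B \<in> \<F> \<and> B - A \<in> \<F>"
      then have "w \<in> A - B \<longleftrightarrow> v \<in> A - B" "w \<in> B - A \<longleftrightarrow> v \<in> B - A"
        using less.hyps[OF fewer_crossings] by auto
      then show ?thesis
        using atom_L[OF B(1)] by blast
    qed
  qed
qed

lemma uncrossable_ex_laminar_atoms:
  assumes "uncrossable \<F>" "finite \<F>"
  shows "\<exists>L\<subseteq>\<F>. laminar L \<and> (\<forall>A\<in>\<F>. \<forall>v w. w \<in> atom L v \<longrightarrow> (w \<in> A \<longleftrightarrow> v \<in> A))"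
proof -
  obtain L where L: "L \<in> {K. K \<subseteq> \<F> \<and> laminar K}"
    and inclusion_maximal: "\<And>K. K \<in> {K. K \<subseteq> \<F> \<and> laminar K} \<Longrightarrow> L \<subseteq> K \<Longrightarrow> L = K"
    using finite_has_maximal[of "{K. K \<subseteq> \<F> \<and> laminar K}"] assms(2)
    by (force simp: laminar_def)
  have "A \<in> L" if "A \<in> \<F>" "\<forall>B\<in>L. \<not> crosses B A" for A
  proof -
    have "laminar (insert A L)"
      using L that unfolding laminar_def by (auto simp: crosses_sym crosses_def)
    then show ?thesis
      using inclusion_maximal[of "insert A L"] L that(1) by blast
  qed
  then show ?thesis
    using L maximal_laminar_atom_iff[OF assms(1) finite_subset[OF _ assms(2)]] by blast
qed

section \<open>Perturbations of extreme points\<close>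

lemma not_extreme_point_of_line:
  fixes x D :: "'a::euclidean_space"
  assumes "D \<noteq> 0" "\<forall>\<^sub>F s in nhds 0. x + s *\<^sub>R D \<in> S"
  shows "\<not> x extreme_point_of S"
proof
  assume extreme: "x extreme_point_of S"
  obtain \<epsilon> :: real where "\<epsilon> > 0" and line: "\<And>s. \<bar>s\<bar> < \<epsilon> \<Longrightarrow> x + s *\<^sub>R D \<in> S"
    using assms(2) unfolding eventually_nhds_metric dist_real_def by auto
  define t where "t = \<epsilon> / 2"
  have endpoints: "x - t *\<^sub>R D \<in> S" "x + t *\<^sub>R D \<in> S"
    using line[of "- t"] line[of t] \<open>\<epsilon> > 0\<close> by (auto simp: t_def)
  have "(x + t *\<^sub>R D) - (x - t *\<^sub>R D) = (2 * t) *\<^sub>R D"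
    by (simp add: algebra_simps flip: scaleR_add_left)
  moreover have "(2 * t) *\<^sub>R D \<noteq> 0"
    using assms(1) \<open>\<epsilon> > 0\<close> by (simp add: t_def)
  ultimately have "x - t *\<^sub>R D \<noteq> x + t *\<^sub>R D"
    by (metis diff_self)
  then have "midpoint (x - t *\<^sub>R D) (x + t *\<^sub>R D) \<in> open_segment (x - t *\<^sub>R D) (x + t *\<^sub>R D)"
    by simp
  moreover have "midpoint (x - t *\<^sub>R D) (x + t *\<^sub>R D) = x"
    by (simp add: midpoint_def algebra_simps flip: scaleR_add_left)
  ultimately show False
    using extreme endpoints unfolding extreme_point_of_def by metis
qed

lemma eventually_nonneg_perturbation:
  fixes g h :: real
  assumes "0 \<le> g" "g = 0 \<Longrightarrow> h = 0"
  shows "\<forall>\<^sub>F s in nhds 0. 0 \<le> g + s * h"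
proof (cases "g = 0")
  case False
  have "((\<lambda>s. g + s * h) \<longlongrightarrow> g + 0 * h) (nhds 0)"
    by (intro tendsto_intros filterlim_ident)
  then have "\<forall>\<^sub>F s in nhds 0. 0 < g + s * h"
    using assms(1) False by (intro order_tendstoD) auto
  then show ?thesis
    by eventually_elim simp
qed (use assms in simp)

section \<open>Extreme points of the polytope\<close>

locale P1tau_point =
  fixes ep1 ep2 :: "'e::finite \<Rightarrow> 'v::finite" and \<tau> :: nat and x :: "real^('e \<times> bool)"
  assumes x_in_P1tau: "x \<in> P1tau ep1 ep2 \<tau>"
begin

definition x_plus :: "'e \<Rightarrow> real" where
  "x_plus e = x $ (e, True)"

definition tight :: "'v set \<Rightarrow> bool" where
  "tight U \<longleftrightarrow> U \<noteq> {} \<and> U \<noteq> UNIV \<and> (\<Sum>a\<in>out_arcs ep1 ep2 U. x $ a) = \<tau>"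

lemma x_minus_eq: "x $ (e, False) = \<tau> - x_plus e"
  using x_in_P1tau unfolding P1tau_def x_plus_def by (auto simp: algebra_simps)

lemma arc_value_ge_1: "1 \<le> x $ a"
proof (cases a)
  case (Pair e b)
  then show ?thesis
    using x_in_P1tau unfolding P1tau_def by (cases b) auto
qed

lemma x_nonneg: "0 \<le> x $ a"
  using arc_value_ge_1[of a] by simp

lemma x_plus_bounds: "1 \<le> x_plus e" "x_plus e \<le> real \<tau> - 1"
  using arc_value_ge_1[of "(e, True)"] arc_value_ge_1[of "(e, False)"] x_minus_eq[of e]
  unfolding x_plus_def by auto

lemma cut_value_ge: "U \<noteq> {} \<Longrightarrow> U \<noteq> UNIV \<Longrightarrow> \<tau> \<le> (\<Sum>a\<in>out_arcs ep1 ep2 U. x $ a)"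
  using x_in_P1tau unfolding P1tau_def by auto

lemma tight_Int_Un:
  assumes "tight U" "tight W" "U \<inter> W \<noteq> {}" "U \<union> W \<noteq> UNIV"
  shows "tight (U \<inter> W)" "tight (U \<union> W)"
proof -
  have "(\<Sum>a\<in>out_arcs ep1 ep2 (U \<inter> W). x $ a) + (\<Sum>a\<in>out_arcs ep1 ep2 (U \<union> W). x $ a) \<le> 2 * \<tau>"
    using sum_out_arcs_submodular[of "\<lambda>a. x $ a" ep1 ep2 U W, OF x_nonneg] assms(1,2)
    unfolding tight_def by simp
  moreover have "U \<inter> W \<noteq> UNIV" "U \<union> W \<noteq> {}"
    using assms(1) unfolding tight_def by auto
  then have "\<tau> \<le> (\<Sum>a\<in>out_arcs ep1 ep2 (U \<inter> W). x $ a)" "\<tau> \<le> (\<Sum>a\<in>out_arcs ep1 ep2 (U \<union> W). x $ a)"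
    using assms(3,4) by (auto intro: cut_value_ge)
  ultimately show "tight (U \<inter> W)" "tight (U \<union> W)"
    using assms(3,4) unfolding tight_def by auto
qed

lemma cut_value_eq:
  "(\<Sum>a\<in>out_arcs ep1 ep2 U. x $ a) =
    net_outflow ep1 ep2 x_plus U + \<tau> * card {e. ep2 e \<in> U \<and> ep1 e \<notin> U}"
  using sum_out_arcs[of "\<lambda>a. x $ a" \<tau>] x_minus_eq by (simp add: x_plus_def[abs_def])

lemma tight_net_outflow_Ints:
  assumes "tight U"
  shows "net_outflow ep1 ep2 x_plus U \<in> \<int>"
proof -
  have "net_outflow ep1 ep2 x_plus U = real \<tau> - real \<tau> * real (card {e. ep2 e \<in> U \<and> ep1 e \<notin> U})"
    using assms cut_value_eq[of U] unfolding tight_def by simp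
  then show ?thesis
    by simp
qed

text \<open>
  Keeping a root r outside every member makes two complements of tight sets intersect,
  so that they can be uncrossed as well.
\<close>
definition rooted_tight_sets :: "'v \<Rightarrow> 'v set set" where
  "rooted_tight_sets r = {S. r \<notin> S \<and> (tight S \<or> tight (- S))}"

lemma uncrossable_rooted_tight_sets: "uncrossable (rooted_tight_sets r)"
  unfolding uncrossable_def
proof (intro ballI impI)
  fix A B
  assume A: "A \<in> rooted_tight_sets r" and B: "B \<in> rooted_tight_sets r" and "crosses A B"
  then have r: "r \<notin> A" "r \<notin> B" and AB: "A \<inter> B \<noteq> {}" "\<not> A \<subseteq> B" "\<not> B \<subseteq> A"
    unfolding rooted_tight_sets_def crosses_def by auto
  consider "tight A" "tight B" | "tight (- A)" "tight (- B)"
    | "tight A" "tight (- B)" | "tight (- A)" "tight B"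
    using A B unfolding rooted_tight_sets_def by auto
  then show "(A \<inter> B \<in> rooted_tight_sets r \<and> A \<union> B \<in> rooted_tight_sets r)
    \<or> (A - B \<in> rooted_tight_sets r \<and> B - A \<in> rooted_tight_sets r)"
  proof cases
    case 1
    then have "tight (A \<inter> B)" "tight (A \<union> B)"
      using tight_Int_Un[OF 1 AB(1)] r by auto
    then show ?thesis
      using r unfolding rooted_tight_sets_def by auto
  next
    case 2
    then have "tight (- A \<inter> - B)" "tight (- A \<union> - B)"
      using tight_Int_Un[OF 2] r AB by auto
    then show ?thesis
      using r unfolding rooted_tight_sets_def by (auto simp: Compl_Int Compl_Un)
  next
    case 3
    then have "tight (A \<inter> - B)" "tight (A \<union> - B)"
      using tight_Int_Un[OF 3] AB by auto
    moreover have "A \<inter> - B = A - B" "A \<union> - B = - (B - A)"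
      by auto
    ultimately show ?thesis
      using r unfolding rooted_tight_sets_def by auto
  next
    case 4
    then have "tight (B \<inter> - A)" "tight (B \<union> - A)"
      using tight_Int_Un[OF 4(2,1)] AB by auto
    moreover have "B \<inter> - A = B - A" "B \<union> - A = - (A - B)"
      by auto
    ultimately show ?thesis
      using r unfolding rooted_tight_sets_def by auto
  qed
qed

lemma ex_laminar_refining_tight_sets:
  "\<exists>L. laminar L \<and> (\<forall>A\<in>L. net_outflow ep1 ep2 x_plus A \<in> \<int>)
     \<and> (\<forall>U v w. tight U \<longrightarrow> w \<in> atom L v \<longrightarrow> (w \<in> U \<longleftrightarrow> v \<in> U))"
proof -
  \<comment> \<open>any vertex will do as root\<close>
  obtain L where L: "L \<subseteq> rooted_tight_sets undefined" "laminar L"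
    and refines: "\<forall>A\<in>rooted_tight_sets undefined. \<forall>v w. w \<in> atom L v \<longrightarrow> (w \<in> A \<longleftrightarrow> v \<in> A)"
    using uncrossable_ex_laminar_atoms[OF uncrossable_rooted_tight_sets finite, of undefined]
    by blast
  have "net_outflow ep1 ep2 x_plus A \<in> \<int>" if "A \<in> L" for A
  proof -
    have "tight A \<or> tight (- A)"
      using that L(1) unfolding rooted_tight_sets_def by blast
    then show ?thesis
    proof
      assume "tight (- A)"
      then have "net_outflow ep1 ep2 x_plus (- A) \<in> \<int>"
        by (rule tight_net_outflow_Ints)
      then show ?thesis
        by (simp add: net_outflow_Compl minus_in_Ints_iff)
    qed (rule tight_net_outflow_Ints)
  qed
  moreover have "w \<in> U \<longleftrightarrow> v \<in> U" if "tight U" "w \<in> atom L v" for U v w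
  proof (cases "undefined \<in> U")
    case True
    then have "- U \<in> rooted_tight_sets undefined"
      using \<open>tight U\<close> unfolding rooted_tight_sets_def by simp
    from refines[rule_format, OF this \<open>w \<in> atom L v\<close>] show ?thesis
      by simp
  next
    case False
    then have "U \<in> rooted_tight_sets undefined"
      using \<open>tight U\<close> unfolding rooted_tight_sets_def by simp
    then show ?thesis
      using refines \<open>w \<in> atom L v\<close> by blast
  qed
  ultimately show ?thesis
    using L(2) by blast
qed

lemma add_arc_vector_in_P1tau:
  assumes arcs: "\<And>e. 1 \<le> x_plus e + s * d e \<and> x_plus e + s * d e \<le> real \<tau> - 1"
    and cuts: "\<And>U. U \<noteq> {} \<Longrightarrow> U \<noteq> UNIV \<Longrightarrow>
      real \<tau> \<le> (\<Sum>a\<in>out_arcs ep1 ep2 U. x $ a) + s * net_outflow ep1 ep2 d U"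
  shows "x + s *\<^sub>R arc_vector d \<in> P1tau ep1 ep2 \<tau>"
  unfolding P1tau_def
proof (intro CollectI conjI allI impI)
  fix e
  have "(x + s *\<^sub>R arc_vector d) $ (e, True) = x_plus e + s * d e"
    "(x + s *\<^sub>R arc_vector d) $ (e, False) = real \<tau> - (x_plus e + s * d e)"
    using x_minus_eq by (simp_all add: arc_vector_def x_plus_def)
  then show "1 \<le> (x + s *\<^sub>R arc_vector d) $ (e, True)" "1 \<le> (x + s *\<^sub>R arc_vector d) $ (e, False)"
    "(x + s *\<^sub>R arc_vector d) $ (e, True) + (x + s *\<^sub>R arc_vector d) $ (e, False) = real \<tau>"
    using arcs[of e] by simp_all
next
  fix U :: "'v set"
  assume "U \<noteq> {} \<and> U \<noteq> UNIV"
  moreover have "(\<Sum>a\<in>out_arcs ep1 ep2 U. (x + s *\<^sub>R arc_vector d) $ a)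
      = (\<Sum>a\<in>out_arcs ep1 ep2 U. x $ a) + s * net_outflow ep1 ep2 d U"
    by (simp add: sum.distrib sum_out_arcs_arc_vector flip: sum_distrib_left)
  ultimately show "real \<tau> \<le> (\<Sum>a\<in>out_arcs ep1 ep2 U. (x + s *\<^sub>R arc_vector d) $ a)"
    using cuts by simp
qed

lemma eventually_perturbation_in_P1tau:
  assumes "\<And>e. d e \<noteq> 0 \<Longrightarrow> x_plus e \<notin> \<int>" "\<And>U. tight U \<Longrightarrow> net_outflow ep1 ep2 d U = 0"
  shows "\<forall>\<^sub>F s in nhds 0. x + s *\<^sub>R arc_vector d \<in> P1tau ep1 ep2 \<tau>"
proof -
  have zero_on_tight_arcs: "d e = 0" if "x_plus e = 1 \<or> x_plus e = real \<tau> - 1" for e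
  proof -
    have "x_plus e \<in> \<int>"
      using that by auto
    then show ?thesis
      using assms(1) by blast
  qed
  have "\<forall>\<^sub>F s in nhds 0.
      0 \<le> (x_plus e - 1) + s * d e \<and> 0 \<le> (real \<tau> - 1 - x_plus e) + s * - d e" for e
    using x_plus_bounds[of e] zero_on_tight_arcs[of e]
    by (intro eventually_conj eventually_nonneg_perturbation) auto
  then have arcs: "\<forall>\<^sub>F s in nhds 0.
      \<forall>e. 0 \<le> (x_plus e - 1) + s * d e \<and> 0 \<le> (real \<tau> - 1 - x_plus e) + s * - d e"
    by (rule eventually_all_finite)
  have "\<forall>\<^sub>F s in nhds 0. U \<noteq> {} \<and> U \<noteq> UNIV \<longrightarrow>
      0 \<le> ((\<Sum>a\<in>out_arcs ep1 ep2 U. x $ a) - \<tau>) + s * net_outflow ep1 ep2 d U" for U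
  proof (cases "U \<noteq> {} \<and> U \<noteq> UNIV")
    case True
    then show ?thesis
      using cut_value_ge[of U] assms(2)[of U] unfolding tight_def
      by (intro eventually_mono[OF eventually_nonneg_perturbation]) auto
  qed auto
  then have cuts: "\<forall>\<^sub>F s in nhds 0. \<forall>U. U \<noteq> {} \<and> U \<noteq> UNIV \<longrightarrow>
      0 \<le> ((\<Sum>a\<in>out_arcs ep1 ep2 U. x $ a) - \<tau>) + s * net_outflow ep1 ep2 d U"
    by (rule eventually_all_finite)
  from arcs cuts show ?thesis
  proof eventually_elim
    case (elim s)
    show ?case
    proof (rule add_arc_vector_in_P1tau)
      show "1 \<le> x_plus e + s * d e \<and> x_plus e + s * d e \<le> real \<tau> - 1" for e
        using elim(1)[rule_format, of e] by linarith
      show "real \<tau> \<le> (\<Sum>a\<in>out_arcs ep1 ep2 U. x $ a) + s * net_outflow ep1 ep2 d U"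
        if "U \<noteq> {}" "U \<noteq> UNIV" for U
        using elim(2)[rule_format, of U] that by linarith
    qed
  qed
qed

lemma x_plus_Ints_if_extreme_point:
  assumes "x extreme_point_of P1tau ep1 ep2 \<tau>"
  shows "x_plus e \<in> \<int>"
proof (rule ccontr)
  assume "x_plus e \<notin> \<int>"
  obtain L where L: "laminar L" "\<forall>A\<in>L. net_outflow ep1 ep2 x_plus A \<in> \<int>"
    and refines: "\<forall>U v w. tight U \<longrightarrow> w \<in> atom L v \<longrightarrow> (w \<in> U \<longleftrightarrow> v \<in> U)"
    using ex_laminar_refining_tight_sets by blast
  have "net_outflow ep1 ep2 x_plus (atom L v) \<in> \<int>" for v
    using L by (intro laminar_atom_Ints[of L "net_outflow ep1 ep2 x_plus"] net_outflow_Un) simp_all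
  then have "net_outflow (atom L \<circ> ep1) (atom L \<circ> ep2) x_plus {S} \<in> \<int>" for S
    unfolding net_outflow_vimage vimage_atom_singleton by auto
  then obtain d where d: "\<exists>e. d e \<noteq> 0" "\<forall>e. d e \<noteq> 0 \<longrightarrow> x_plus e \<notin> \<int>"
    and circulation: "\<forall>S. net_outflow (atom L \<circ> ep1) (atom L \<circ> ep2) d {S} = 0"
    using ex_fractional_circulation \<open>x_plus e \<notin> \<int>\<close> by blast
  have "net_outflow ep1 ep2 d U = 0" if "tight U" for U
  proof (rule net_outflow_eq_0_if_quotient_circulation)
    show "atom L -` atom L ` U = U"
      using refines that by (auto simp: atom_eq_iff)
  qed (use circulation in blast)
  with d(2) have "\<forall>\<^sub>F s in nhds 0. x + s *\<^sub>R arc_vector d \<in> P1tau ep1 ep2 \<tau>"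
    by (intro eventually_perturbation_in_P1tau) simp_all
  moreover have "arc_vector d \<noteq> 0"
    using d(1) by (auto simp: arc_vector_def vec_eq_iff)
  ultimately have "\<not> x extreme_point_of P1tau ep1 ep2 \<tau>"
    by (intro not_extreme_point_of_line)
  with assms show False
    by contradiction
qed

lemma Ints_if_extreme_point:
  assumes "x extreme_point_of P1tau ep1 ep2 \<tau>"
  shows "x $ a \<in> \<int>"
proof (cases a)
  case (Pair e b)
  have "x_plus e \<in> \<int>"
    using assms by (rule x_plus_Ints_if_extreme_point)
  then show ?thesis
    using Pair x_minus_eq[of e] by (cases b) (simp_all add: x_plus_def)
qed

end

theorem mainTheorem15:
  fixes ep1 ep2 :: "'e::finite \<Rightarrow> 'v::finite" and \<tau> :: nat
  assumes loopless: "\<And>e. ep1 e \<noteq> ep2 e"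
    and tau_pos: "\<tau> > 0"
  shows "\<forall>x. x extreme_point_of (P1tau ep1 ep2 \<tau>) \<longrightarrow> (\<forall>a. x $ a \<in> \<int>)"
proof (intro allI impI)
  fix x a
  assume extreme: "x extreme_point_of (P1tau ep1 ep2 \<tau>)"
  then interpret P1tau_point ep1 ep2 \<tau> x
    by unfold_locales (simp add: extreme_point_of_def)
  show "x $ a \<in> \<int>"
    using extreme by (rule Ints_if_extreme_point)
qed

end
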